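(* Let $\mathcal{F}=\{f_i\}_{i=1}^k$ be a frame for $\mathcal{H}_n$ with $\operatorname{rob}(\mathcal{F})=r$, and let $P$ be the orthogonal projection onto a subspace $U$ of $\mathcal{H}_n$. Then the frame $P\mathcal{F}=\{Pf_i\}_{i=1}^k$ for $U$ has maximum robustness $r$ if and only if there exists a subset $\mathcal{F}'$ of $\mathcal{F}$ consisting of $k-r-1$ vectors which does not span $\mathcal{H}_n$ and satisfies $\operatorname{span}(\mathcal{F}')^\perp\subseteq U$.
   Context: $\mathcal{H}_n$ is an $n$-dimensional real or complex Hilbert space. A finite sequence of vectors in a finite-dimensional Hilbert space $V$ is a frame for $V$ iff it spans $V$. A frame $\{f_i\}_{i=1}^k$ for $V$ is robust to $r$ erasures if for every index set $I\subseteq\{1,\dots,k\}$ with $|I|=r$, the sequence $\{f_i\}_{i\notin I}$ still spans $V$. The maximum robustness $\operatorname{rob}(\mathcal{F})$ is the largest $r$ such that $\mathcal{F}$ is robust to $r$ erasures. *)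

theory Defs
  imports "HOL-Analysis.Analysis"
begin

text \<open>Vectors of the n-dimensional space are 'k^'n, 'k = real or complex, n = CARD('n).
  The parameter cj is the scalar conjugation (id for real, cnj for complex).\<close>

definition sinner :: "('k::field \<Rightarrow> 'k) \<Rightarrow> 'k^'n \<Rightarrow> 'k^'n \<Rightarrow> 'k" where
  "sinner cj x y = (\<Sum>i\<in>UNIV. x $ i * cj (y $ i))"

definition orth_compl :: "('k::field \<Rightarrow> 'k) \<Rightarrow> ('k^'n) set \<Rightarrow> ('k^'n) set" where
  "orth_compl cj S = {x. \<forall>y\<in>S. sinner cj y x = 0}"

definition is_orth_proj :: "('k::field \<Rightarrow> 'k) \<Rightarrow> ('k^'n) set \<Rightarrow> ('k^'n \<Rightarrow> 'k^'n) \<Rightarrow> bool" where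
  "is_orth_proj cj U P \<longleftrightarrow> (\<forall>x. P x \<in> U \<and> (\<forall>u\<in>U. sinner cj (x - P x) u = 0))"

definition is_frame :: "(nat \<Rightarrow> 'k::field^'n) \<Rightarrow> nat \<Rightarrow> ('k^'n) set \<Rightarrow> bool" where
  "is_frame f k V \<longleftrightarrow> vec.span (f ` {1..k}) = V"

definition robust_to :: "(nat \<Rightarrow> 'k::field^'n) \<Rightarrow> nat \<Rightarrow> ('k^'n) set \<Rightarrow> nat \<Rightarrow> bool" where
  "robust_to f k V r \<longleftrightarrow> (\<forall>I. I \<subseteq> {1..k} \<and> card I = r \<longrightarrow> vec.span (f ` ({1..k} - I)) = V)"

text \<open>Maximum robustness: largest r (necessarily r \<le> k, as an erasure set has at most k
  elements) such that the frame is robust to r erasures.\<close>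
definition rob :: "(nat \<Rightarrow> 'k::field^'n) \<Rightarrow> nat \<Rightarrow> ('k^'n) set \<Rightarrow> nat" where
  "rob f k V = Max {r. r \<le> k \<and> robust_to f k V r}"

end

theory Submission
  imports Defs
begin

text \<open>As \<open>P\<close> is linear and onto \<open>U\<close>, \<open>span (P ` X) = P ` span X\<close>; so \<open>P \<circ> f\<close> is still robust
  to \<open>r\<close> erasures, and it fails to be robust to \<open>r + 1\<close> iff \<open>P ` W \<noteq> U\<close> for the span \<open>W\<close> of
  some \<open>k - r - 1\<close> of the vectors. Robustness of \<open>f\<close> makes every such \<open>W\<close> of codimension at most
  one. Now \<open>P ` W \<noteq> U\<close> iff \<open>W + ker P\<close> is proper iff some nonzero \<open>z\<close> is orthogonal to \<open>W\<close>
  and to \<open>ker P\<close>, i.e. lies in \<open>U\<close>; as \<open>W\<^sup>\<bottom>\<close> is at most one-dimensional, this says exactly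
  that \<open>W\<close> is proper and \<open>W\<^sup>\<bottom> \<subseteq> U\<close>.\<close>

lemma robust_to_mono:
  fixes f :: "nat \<Rightarrow> 'k::field^'n"
  assumes "vec.span (f ` {1..k}) = V" and "robust_to f k V s" and "t \<le> s" and "s \<le> k"
  shows "robust_to f k V t"
  unfolding robust_to_def
proof (intro allI impI)
  fix I assume I: "I \<subseteq> {1..k} \<and> card I = t"
  have "finite I" using I finite_subset by blast
  then have "s - t \<le> card ({1..k} - I)" using I assms(3,4) by (simp add: card_Diff_subset)
  then obtain A where A: "A \<subseteq> {1..k} - I" "card A = s - t" "finite A"
    by (rule obtain_subset_with_card_n)
  have "card (I \<union> A) = s"
    using card_Un_disjoint[OF \<open>finite I\<close> A(3)] A I assms(3) by auto
  moreover have "I \<union> A \<subseteq> {1..k}" using A I by auto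
  ultimately have "vec.span (f ` ({1..k} - (I \<union> A))) = V"
    using assms(2) unfolding robust_to_def by blast
  moreover have "vec.span (f ` ({1..k} - (I \<union> A))) \<subseteq> vec.span (f ` ({1..k} - I))"
    and "vec.span (f ` ({1..k} - I)) \<subseteq> vec.span (f ` {1..k})"
    by (intro vec.span_mono image_mono; auto)+
  ultimately show "vec.span (f ` ({1..k} - I)) = V" using assms(1) by auto
qed

lemma rob_le_robust_to:
  fixes f :: "nat \<Rightarrow> 'k::field^'n"
  assumes "vec.span (f ` {1..k}) = V"
  shows "rob f k V \<le> k" and "robust_to f k V (rob f k V)"
proof -
  let ?R = "{r. r \<le> k \<and> robust_to f k V r}"
  have "robust_to f k V 0"
    using assms by (auto simp: robust_to_def card_eq_0_iff finite_subset)
  then have "Max ?R \<in> ?R" by (intro Max_in) (auto intro: finite_subset[of _ "{..k}"])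
  then show "rob f k V \<le> k" and "robust_to f k V (rob f k V)" unfolding rob_def by simp_all
qed

lemma not_robust_to_all_erasures:
  fixes f :: "nat \<Rightarrow> 'k::field^'n"
  assumes "V \<noteq> {0}"
  shows "\<not> robust_to f k V k"
proof
  assume "robust_to f k V k"
  moreover have "card {1..k} = k" by simp
  ultimately have "vec.span (f ` ({1..k} - {1..k})) = V" unfolding robust_to_def by blast
  with assms show False by simp
qed

lemma rob_eq_iff_not_robust_to_Suc:
  fixes f :: "nat \<Rightarrow> 'k::field^'n"
  assumes "vec.span (f ` {1..k}) = V" and "robust_to f k V r" and "r < k"
  shows "rob f k V = r \<longleftrightarrow> \<not> robust_to f k V (Suc r)"
proof
  let ?R = "{r. r \<le> k \<and> robust_to f k V r}"
  have fin: "finite ?R" by (rule finite_subset[of _ "{..k}"]) auto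
  show "\<not> robust_to f k V (Suc r)" if "rob f k V = r"
    using that Max_ge[OF fin, of "Suc r"] assms(3) unfolding rob_def by auto
  show "rob f k V = r" if "\<not> robust_to f k V (Suc r)"
  proof -
    have "s \<le> r" if "s \<in> ?R" for s
      using that robust_to_mono[OF assms(1), of s "Suc r"] \<open>\<not> robust_to f k V (Suc r)\<close>
      by (cases "s \<le> r") auto
    then show ?thesis using assms(2,3) fin unfolding rob_def by (intro Max_eqI) auto
  qed
qed

lemma not_robust_to_iff:
  fixes f :: "nat \<Rightarrow> 'k::field^'n"
  assumes "s \<le> k"
  shows "\<not> robust_to f k V s \<longleftrightarrow>
    (\<exists>J. J \<subseteq> {1..k} \<and> card J + s = k \<and> vec.span (f ` J) \<noteq> V)"
proof
  assume "\<not> robust_to f k V s"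
  then obtain I where I: "I \<subseteq> {1..k}" "card I = s" "vec.span (f ` ({1..k} - I)) \<noteq> V"
    unfolding robust_to_def by blast
  moreover have "card ({1..k} - I) + s = k"
    using I card_mono[OF _ I(1)] by (simp add: card_Diff_subset finite_subset)
  ultimately show "\<exists>J. J \<subseteq> {1..k} \<and> card J + s = k \<and> vec.span (f ` J) \<noteq> V"
    by (intro exI[of _ "{1..k} - I"]) auto
next
  assume "\<exists>J. J \<subseteq> {1..k} \<and> card J + s = k \<and> vec.span (f ` J) \<noteq> V"
  then obtain J where J: "J \<subseteq> {1..k}" "card J + s = k" "vec.span (f ` J) \<noteq> V" by blast
  then have "card ({1..k} - J) = s" and "{1..k} - ({1..k} - J) = J"
    by (auto simp: card_Diff_subset finite_subset)
  with J show "\<not> robust_to f k V s"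
    unfolding robust_to_def by (metis Diff_subset)
qed

lemma robust_to_linear_image:
  fixes f :: "nat \<Rightarrow> 'k::field^'n" and g :: "'k^'n \<Rightarrow> 'k^'m"
  assumes "Vector_Spaces.linear (*s) (*s) g" and "robust_to f k V r"
  shows "robust_to (g \<circ> f) k (g ` V) r"
proof -
  interpret g: Vector_Spaces.linear "(*s) :: 'k \<Rightarrow> 'k^'n \<Rightarrow> _" "(*s) :: 'k \<Rightarrow> 'k^'m \<Rightarrow> _" g
    by (fact assms(1))
  show ?thesis
    unfolding robust_to_def
  proof (intro allI impI)
    fix I assume "I \<subseteq> {1..k} \<and> card I = r"
    then have "vec.span (f ` ({1..k} - I)) = V" using assms(2) unfolding robust_to_def by blast
    then show "vec.span ((g \<circ> f) ` ({1..k} - I)) = g ` V"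
      unfolding image_comp[symmetric] g.span_image by simp
  qed
qed

lemma span_insert_if_robust_to:
  fixes f :: "nat \<Rightarrow> 'k::field^'n"
  assumes "robust_to f k V r" and "J \<subseteq> {1..k}" and "card J + Suc r = k"
  shows "\<exists>i. vec.span (insert (f i) (f ` J)) = V"
proof -
  have "card ({1..k} - J) = Suc r"
    using assms(2,3) by (auto simp: card_Diff_subset finite_subset)
  then have "{1..k} - J \<noteq> {}" by (metis card.empty Zero_not_Suc)
  then obtain i where i: "i \<in> {1..k} - J" by blast
  have "card ({1..k} - J - {i}) = r" using i \<open>card ({1..k} - J) = Suc r\<close> by simp
  then have "vec.span (f ` ({1..k} - ({1..k} - J - {i}))) = V"
    by (intro assms(1)[unfolded robust_to_def, rule_format]) auto
  moreover have "{1..k} - ({1..k} - J - {i}) = insert i J" using assms(2) i by auto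
  ultimately show ?thesis by auto
qed

locale field_involution =
  fixes cj :: "'k::field \<Rightarrow> 'k"
  assumes cj_add: "cj (a + b) = cj a + cj b"
    and cj_mult: "cj (a * b) = cj a * cj b"
    and cj_cj [simp]: "cj (cj a) = a"
begin

lemma cj_0 [simp]: "cj 0 = 0"
proof -
  have "cj 0 + cj 0 = cj 0 + 0" using cj_add[of 0 0] by simp
  then show ?thesis by (rule add_left_imp_eq)
qed

lemma cj_diff: "cj (a - b) = cj a - cj b"
  using cj_add[of "a - b" b] by (simp add: algebra_simps)

lemma sinner_add_left: "sinner cj (x + y) z = sinner cj x z + sinner cj y z"
  by (simp add: sinner_def algebra_simps sum.distrib)

lemma sinner_diff_left: "sinner cj (x - y) z = sinner cj x z - sinner cj y z"
  by (simp add: sinner_def algebra_simps sum_subtractf)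

lemma sinner_scale_left: "sinner cj (a *s x) z = a * sinner cj x z"
  by (simp add: sinner_def algebra_simps sum_distrib_left)

lemma sinner_0_left [simp]: "sinner cj 0 y = 0"
  by (simp add: sinner_def)

lemma sinner_diff_right: "sinner cj x (y - z) = sinner cj x y - sinner cj x z"
  by (simp add: sinner_def cj_diff algebra_simps sum_subtractf)

lemma sinner_scale_right: "sinner cj x (a *s z) = cj a * sinner cj x z"
  by (simp add: sinner_def cj_mult algebra_simps sum_distrib_left)

lemma sinner_axis_left: "sinner cj (axis i 1) y = cj (y $ i)"
  by (simp add: sinner_def axis_def if_distrib[of "\<lambda>a. a * _"] cong: if_cong)

lemma subspace_orth: "vec.subspace {v. sinner cj v y = 0}"
  unfolding vec.subspace_def by (simp add: sinner_add_left sinner_scale_left)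

lemma orth_compl_span [simp]: "orth_compl cj (vec.span S) = orth_compl cj S"
  using vec.span_superset vec.span_minimal[OF _ subspace_orth]
  unfolding orth_compl_def by blast

lemma orth_compl_UNIV: "orth_compl cj UNIV = {0}"
proof -
  have "y $ i = 0" if "y \<in> orth_compl cj UNIV" for y i
  proof -
    have "cj (y $ i) = 0" using that by (simp add: orth_compl_def flip: sinner_axis_left)
    then show ?thesis using cj_cj[of "y $ i"] by simp
  qed
  moreover have "0 \<in> orth_compl cj UNIV" by (simp add: orth_compl_def sinner_def)
  ultimately show ?thesis by (auto simp: vec_eq_iff)
qed

lemma orth_compl_eq_0_if_span_UNIV: "vec.span S = UNIV \<Longrightarrow> orth_compl cj S = {0}"
  by (metis orth_compl_UNIV orth_compl_span)

text \<open>The nonzero vector comes from a linear functional vanishing on S (extended from a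
  basis of S and one extra vector), read off in coordinates.\<close>
lemma orth_compl_nontrivial:
  fixes S :: "('k^'n) set"
  assumes "vec.subspace S" and "S \<noteq> UNIV"
  obtains z where "z \<noteq> 0" and "z \<in> orth_compl cj S"
proof -
  obtain e where e: "e \<notin> S" using assms by auto
  obtain B where B: "B \<subseteq> S" "vec.independent B" "S \<subseteq> vec.span B"
    using vec.maximal_independent_subset[of S] by blast
  have eB: "e \<notin> vec.span B"
    using vec.span_minimal[OF B(1) assms(1)] e by auto
  interpret p: vector_space_pair "(*s) :: 'k \<Rightarrow> 'k^'n \<Rightarrow> _" "(*) :: 'k \<Rightarrow> 'k \<Rightarrow> 'k"
    by unfold_locales
  obtain g where g: "Vector_Spaces.linear (*s) (*) g" "\<forall>x\<in>insert e B. g x = (if x = e then 1 else 0)"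
    using p.linear_independent_extend[OF vec.independent_insertI[OF eB B(2)],
        of "\<lambda>x. if x = e then 1 else 0"]
    by blast
  interpret g: Vector_Spaces.linear "(*s) :: 'k \<Rightarrow> 'k^'n \<Rightarrow> _" "(*) :: 'k \<Rightarrow> 'k \<Rightarrow> 'k" g
    by (fact g(1))
  have "g x = 0" if "x \<in> B" for x
    using g(2) eB vec.span_base[OF that] that by auto
  then have "g w = 0" if "w \<in> S" for w
    using g.eq_0_on_span[of B w] B(3) that by auto
  moreover define z :: "'k^'n" where "z = (\<chi> i. cj (g (axis i 1)))"
  have sinner_z: "sinner cj w z = g w" for w
  proof -
    have "g w = g (\<Sum>i\<in>UNIV. w $ i *s axis i 1)" by (simp add: basis_expansion)
    then show ?thesis by (simp add: g.sum g.scale sinner_def z_def)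
  qed
  moreover have "z \<noteq> 0" using sinner_z[of e] g(2) by (auto simp: sinner_def)
  ultimately show ?thesis
    using that[of z] by (auto simp: orth_compl_def)
qed

lemma orth_compl_in_span_if_span_insert_UNIV:
  assumes "vec.span (insert v S) = UNIV" and "z \<in> orth_compl cj S" "z \<noteq> 0"
    and "x \<in> orth_compl cj S"
  shows "x \<in> vec.span {z}"
proof -
  define a where "a = sinner cj v z"
  define b where "b = sinner cj v x"
  have "a \<noteq> 0"
  proof
    assume "a = 0"
    then have "z \<in> orth_compl cj (insert v S)" using assms(2) by (simp add: orth_compl_def a_def)
    then show False using assms(3) orth_compl_eq_0_if_span_UNIV[OF assms(1)] by simp
  qed
  have "cj a *s x - cj b *s z \<in> orth_compl cj (insert v S)"
    using assms(2,4) unfolding orth_compl_def a_def b_def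
    by (auto simp: sinner_diff_right sinner_scale_right)
  then have eq: "cj a *s x = cj b *s z"
    using orth_compl_eq_0_if_span_UNIV[OF assms(1)] by simp
  have "cj a \<noteq> 0" using \<open>a \<noteq> 0\<close> cj_cj[of a] by (metis cj_0)
  then have "x = inverse (cj a) *s (cj a *s x)" by simp
  also have "\<dots> = (inverse (cj a) * cj b) *s z" by (simp add: eq)
  finally show ?thesis using vec.span_scale[OF vec.span_base[of z "{z}"]] by simp
qed

end

locale orth_projection = field_involution cj for cj :: "'k::field \<Rightarrow> 'k" +
  fixes U :: "('k^'n) set" and P :: "'k^'n \<Rightarrow> 'k^'n"
  assumes sinner_self_eq_0: "sinner cj (x :: 'k^'n) x = 0 \<Longrightarrow> x = 0"
    and subspace_U: "vec.subspace U"
    and is_orth_proj: "is_orth_proj cj U P"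
begin

lemma proj_in_U: "P x \<in> U"
  using is_orth_proj unfolding is_orth_proj_def by blast

lemma proj_orth: "u \<in> U \<Longrightarrow> sinner cj (x - P x) u = 0"
  using is_orth_proj unfolding is_orth_proj_def by blast

lemma proj_unique:
  assumes "u \<in> U" and "\<And>v. v \<in> U \<Longrightarrow> sinner cj (x - u) v = 0"
  shows "P x = u"
proof -
  have d: "P x - u \<in> U" using assms(1) proj_in_U subspace_U by (simp add: vec.subspace_diff)
  have "sinner cj (P x - u) (P x - u) = sinner cj ((x - u) - (x - P x)) (P x - u)"
    by (simp add: algebra_simps)
  also have "\<dots> = sinner cj (x - u) (P x - u) - sinner cj (x - P x) (P x - u)"
    by (rule sinner_diff_left)
  also have "\<dots> = 0" by (simp add: assms(2)[OF d] proj_orth[OF d])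
  finally have "P x - u = 0" by (rule sinner_self_eq_0)
  then show ?thesis by simp
qed

lemma proj_id: "u \<in> U \<Longrightarrow> P u = u"
  by (rule proj_unique) auto

lemma range_proj: "range P = U"
  using proj_in_U proj_id by (auto intro: range_eqI[of _ P, OF proj_id[symmetric]])

lemma linear_proj: "Vector_Spaces.linear (*s) (*s) P"
  unfolding Vector_Spaces.linear_iff
proof (intro conjI allI vec.vector_space_axioms)
  show "P (x + y) = P x + P y" for x y
  proof (rule proj_unique)
    show "P x + P y \<in> U" using proj_in_U subspace_U by (simp add: vec.subspace_add)
    have eq: "x + y - (P x + P y) = (x - P x) + (y - P y)" by simp
    show "sinner cj (x + y - (P x + P y)) v = 0" if "v \<in> U" for v
      unfolding eq sinner_add_left using proj_orth[OF that] by simp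
  qed
  show "P (c *s x) = c *s P x" for c x
  proof (rule proj_unique)
    show "c *s P x \<in> U" using proj_in_U subspace_U by (simp add: vec.subspace_scale)
    have eq: "c *s x - c *s P x = c *s (x - P x)" by (simp add: vec.scale_right_diff_distrib)
    show "sinner cj (c *s x - c *s P x) v = 0" if "v \<in> U" for v
      unfolding eq sinner_scale_left using proj_orth[OF that] by simp
  qed
qed

sublocale proj: Vector_Spaces.linear "(*s) :: 'k \<Rightarrow> 'k^'n \<Rightarrow> _" "(*s) :: 'k \<Rightarrow> 'k^'n \<Rightarrow> _" P
  by (fact linear_proj)

lemma in_U_if_orth_kernel:
  assumes "z \<in> orth_compl cj {x. P x = 0}"
  shows "z \<in> U"
proof -
  have "P (z - P z) = 0" using proj_id[OF proj_in_U] by (simp add: proj.diff)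
  then have "sinner cj (z - P z) z = 0" using assms unfolding orth_compl_def by blast
  then have "sinner cj (z - P z) (z - P z) = 0"
    using proj_orth[OF proj_in_U] by (simp add: sinner_diff_right)
  then have "z - P z = 0" by (rule sinner_self_eq_0)
  then show ?thesis using proj_in_U[of z] by simp
qed

lemma proj_image_neq_if_orth_compl_subset:
  assumes "vec.subspace W" and "W \<noteq> UNIV" and "orth_compl cj W \<subseteq> U"
  shows "P ` W \<noteq> U"
proof
  assume PW: "P ` W = U"
  obtain z where "z \<noteq> 0" "z \<in> orth_compl cj W" using orth_compl_nontrivial[OF assms(1,2)] .
  moreover from this obtain w where "w \<in> W" "z = P w" using assms(3) PW by blast
  ultimately have "sinner cj (P w) z = 0"
    using proj_orth[of z w] assms(3) by (auto simp: orth_compl_def sinner_diff_left)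
  with \<open>z = P w\<close> \<open>z \<noteq> 0\<close> sinner_self_eq_0[of z] show False by simp
qed

lemma orth_compl_subset_if_proj_image_neq:
  assumes "vec.subspace W" and "vec.span (insert v W) = UNIV" and "P ` W \<noteq> U"
  shows "orth_compl cj W \<subseteq> U"
proof -
  let ?N = "{x. P x = 0}"
  have "U \<subseteq> P ` W" if all: "vec.span (W \<union> ?N) = UNIV"
  proof
    fix u assume "u \<in> U"
    have "u \<in> vec.span (W \<union> ?N)" using all by simp
    then obtain a b where "u = a + b" "a \<in> vec.span W" "b \<in> vec.span ?N"
      unfolding vec.span_Un by blast
    moreover have "vec.span W = W" "vec.span ?N = ?N"
      using assms(1) proj.subspace_kernel by (simp_all add: vec.span_eq_iff)
    ultimately have "a \<in> W" and "P b = 0" by auto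
    have "u = P a" using proj_id[OF \<open>u \<in> U\<close>] \<open>u = a + b\<close> \<open>P b = 0\<close> by (simp add: proj.add)
    then show "u \<in> P ` W" using \<open>a \<in> W\<close> by (rule image_eqI)
  qed
  moreover have "P ` W \<subseteq> U" using proj_in_U by blast
  ultimately have "vec.span (W \<union> ?N) \<noteq> UNIV" using assms(3) by blast
  then obtain z where z: "z \<noteq> 0" "z \<in> orth_compl cj (vec.span (W \<union> ?N))"
    by (rule orth_compl_nontrivial[OF vec.subspace_span])
  then have "z \<in> orth_compl cj (W \<union> ?N)" by simp
  then have "z \<in> orth_compl cj W" "z \<in> orth_compl cj ?N"
    by (auto simp: orth_compl_def)
  have "orth_compl cj W \<subseteq> vec.span {z}"
    using orth_compl_in_span_if_span_insert_UNIV[OF assms(2) \<open>z \<in> orth_compl cj W\<close> z(1)] by blast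
  also have "vec.span {z} \<subseteq> U"
    using in_U_if_orth_kernel[OF \<open>z \<in> orth_compl cj ?N\<close>] subspace_U by (simp add: vec.span_minimal)
  finally show ?thesis .
qed

lemma proj_image_span_neq_iff:
  assumes "vec.span (insert v S) = UNIV"
  shows "P ` vec.span S \<noteq> U \<longleftrightarrow> vec.span S \<noteq> UNIV \<and> orth_compl cj (vec.span S) \<subseteq> U"
proof
  have "vec.span (insert v S) \<subseteq> vec.span (insert v (vec.span S))"
    by (intro vec.span_mono insert_mono vec.span_superset)
  with assms have codim_le_1: "vec.span (insert v (vec.span S)) = UNIV" by blast
  assume "P ` vec.span S \<noteq> U"
  moreover from this have "vec.span S \<noteq> UNIV" using range_proj by auto
  ultimately show "vec.span S \<noteq> UNIV \<and> orth_compl cj (vec.span S) \<subseteq> U"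
    using orth_compl_subset_if_proj_image_neq[OF vec.subspace_span codim_le_1] by simp
next
  assume "vec.span S \<noteq> UNIV \<and> orth_compl cj (vec.span S) \<subseteq> U"
  then show "P ` vec.span S \<noteq> U"
    using proj_image_neq_if_orth_compl_subset[OF vec.subspace_span] by simp
qed

lemma rob_proj_eq_iff:
  fixes f :: "nat \<Rightarrow> 'k^'n"
  assumes "is_frame f k UNIV" and "rob f k UNIV = r"
  shows "rob (P \<circ> f) k U = r \<longleftrightarrow>
    (\<exists>J. J \<subseteq> {1..k} \<and> card J + r + 1 = k \<and> vec.span (f ` J) \<noteq> UNIV \<and>
      orth_compl cj (vec.span (f ` J)) \<subseteq> U)" (is "_ \<longleftrightarrow> ?rhs")
proof -
  let ?K = "{1..k}"
  have span: "vec.span (f ` ?K) = UNIV" using assms(1) unfolding is_frame_def .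
  have robust: "robust_to f k UNIV r" and "r \<le> k"
    using rob_le_robust_to[OF span] assms(2) by simp_all
  have "(UNIV :: ('k^'n) set) \<noteq> {0}"
  proof
    assume "(UNIV :: ('k^'n) set) = {0}"
    then have "axis undefined (1::'k) = (0 :: 'k^'n)" by blast
    then show False by (simp add: axis_eq_0_iff)
  qed
  then have "\<not> robust_to f k UNIV k" by (rule not_robust_to_all_erasures)
  with robust have "r \<noteq> k" by auto
  with \<open>r \<le> k\<close> have "r < k" by simp
  have span_proj: "vec.span ((P \<circ> f) ` J) = P ` vec.span (f ` J)" for J
    unfolding image_comp[symmetric] by (rule proj.span_image)
  have frame_proj: "vec.span ((P \<circ> f) ` ?K) = U" using span span_proj range_proj by simp
  have robust_proj: "robust_to (P \<circ> f) k U r"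
    using robust_to_linear_image[OF linear_proj robust] range_proj by simp
  have image_neq_iff: "P ` vec.span (f ` J) \<noteq> U \<longleftrightarrow>
      vec.span (f ` J) \<noteq> UNIV \<and> orth_compl cj (vec.span (f ` J)) \<subseteq> U"
    if J: "J \<subseteq> ?K" and card: "card J + Suc r = k" for J
  proof -
    obtain i where "vec.span (insert (f i) (f ` J)) = UNIV"
      using span_insert_if_robust_to[OF robust J card] by blast
    then show ?thesis by (rule proj_image_span_neq_iff)
  qed
  have "rob (P \<circ> f) k U = r \<longleftrightarrow> \<not> robust_to (P \<circ> f) k U (Suc r)"
    by (rule rob_eq_iff_not_robust_to_Suc[OF frame_proj robust_proj \<open>r < k\<close>])
  also have "\<dots> \<longleftrightarrow> (\<exists>J. J \<subseteq> ?K \<and> card J + Suc r = k \<and> P ` vec.span (f ` J) \<noteq> U)"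
    unfolding span_proj[symmetric] by (rule not_robust_to_iff) (use \<open>r < k\<close> in simp)
  also have "\<dots> \<longleftrightarrow> ?rhs"
  proof (rule ex_cong1)
    fix J
    show "(J \<subseteq> ?K \<and> card J + Suc r = k \<and> P ` vec.span (f ` J) \<noteq> U) \<longleftrightarrow>
        (J \<subseteq> ?K \<and> card J + r + 1 = k \<and> vec.span (f ` J) \<noteq> UNIV \<and>
          orth_compl cj (vec.span (f ` J)) \<subseteq> U)"
      using image_neq_iff[of J] by (cases "J \<subseteq> ?K \<and> card J + Suc r = k") auto
  qed
  finally show ?thesis .
qed

end

lemma orth_projection_real:
  fixes P :: "real^'n \<Rightarrow> real^'n"
  assumes "vec.subspace U" and "is_orth_proj id U P"
  shows "orth_projection id U P"
proof unfold_locales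
  show "x = 0" if "sinner id x x = 0" for x :: "real^'n"
    using that by (simp add: sinner_def sum_nonneg_eq_0_iff vec_eq_iff)
qed (use assms in simp_all)

lemma orth_projection_complex:
  fixes P :: "complex^'n \<Rightarrow> complex^'n"
  assumes "vec.subspace U" and "is_orth_proj cnj U P"
  shows "orth_projection cnj U P"
proof unfold_locales
  show "x = 0" if "sinner cnj x x = 0" for x :: "complex^'n"
  proof -
    have "sinner cnj x x = of_real (\<Sum>i\<in>UNIV. (norm (x $ i))\<^sup>2)"
      by (simp add: sinner_def complex_norm_square del: of_real_power)
    with that have "(\<Sum>i\<in>UNIV. (norm (x $ i))\<^sup>2) = 0" by (simp only: of_real_eq_0_iff)
    then show ?thesis by (simp add: sum_nonneg_eq_0_iff vec_eq_iff)
  qed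
qed (use assms in simp_all)

theorem theorem2p4:
  shows
  "(\<forall>(f :: nat \<Rightarrow> real^'n) k r U P.
      is_frame f k UNIV \<and> rob f k UNIV = r \<and> vec.subspace U \<and> is_orth_proj id U P \<longrightarrow>
      (rob (P \<circ> f) k U = r \<longleftrightarrow>
        (\<exists>J. J \<subseteq> {1..k} \<and> card J + r + 1 = k \<and> vec.span (f ` J) \<noteq> UNIV \<and>
             orth_compl id (vec.span (f ` J)) \<subseteq> U)))
   \<and>
   (\<forall>(f :: nat \<Rightarrow> complex^'n) k r U P.
      is_frame f k UNIV \<and> rob f k UNIV = r \<and> vec.subspace U \<and> is_orth_proj cnj U P \<longrightarrow>
      (rob (P \<circ> f) k U = r \<longleftrightarrow>
        (\<exists>J. J \<subseteq> {1..k} \<and> card J + r + 1 = k \<and> vec.span (f ` J) \<noteq> UNIV \<and>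
             orth_compl cnj (vec.span (f ` J)) \<subseteq> U)))"
  by (intro conjI allI impI; elim conjE;
      (rule orth_projection.rob_proj_eq_iff[OF orth_projection_real]
        orth_projection.rob_proj_eq_iff[OF orth_projection_complex]; assumption))

end
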